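(* Let $p$ be an odd prime and for $n\geq 0$ let $b_n=(p^n-1)/(p-1)$. Then for every integer $j\geq 0$ and every $\tau\in\mathbb{H}$, $$\prod_{k=0}^{p^j-1}\theta_3\Big(\tau+\frac{2k}{p^j}\Big)=\frac{\theta_3^{b_{j+1}}(p^j\tau)}{\theta_3^{b_j}(p^{j+1}\tau)}.$$
   Context: $\mathbb{H}=\{\tau\in\mathbb{C}:\Im(\tau)>0\}$. For $\tau\in\mathbb{H}$, $\theta_3(\tau)=1+2\sum_{\nu=1}^{\infty}e^{\pi i\nu^2\tau}$. *)

theory Defs
  imports "HOL-Analysis.Analysis" "HOL-Computational_Algebra.Primes"
begin

definition upper_half_plane :: "complex set" where
  "upper_half_plane = {\<tau>. Im \<tau> > 0}"

definition theta3 :: "complex \<Rightarrow> complex" where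
  "theta3 \<tau> = 1 + 2 * (\<Sum>\<nu>. exp (pi * \<i> * of_nat ((Suc \<nu>)^2) * \<tau>))"

definition b_seq :: "nat \<Rightarrow> nat \<Rightarrow> nat" where
  "b_seq p n = (p ^ n - 1) div (p - 1)"

end

theory Submission
  imports Defs "HOL-Computational_Algebra.Fundamental_Theorem_Algebra"
begin

text \<open>With the nome \<open>q = exp (\<pi> \<i> \<tau>)\<close> and \<open>\<zeta> = exp (2\<pi> \<i> / p)\<close> one has
  \<open>theta3 (\<tau> + 2k/p) = \<theta>(q \<zeta>^k)\<close>, where \<open>\<theta>(q) = 1 + 2 \<Sum> q^(n^2)\<close>. Jacobi's triple product
  writes \<open>\<theta>(q)\<close> as \<open>\<Prod> (1 - q^(2n)) (1 + q^(2n-1))^2\<close>, and for an odd prime \<open>p\<close> the product of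
  \<open>1 \<pm> (q \<zeta>^k)^e\<close> over \<open>k < p\<close> is \<open>(1 \<pm> q^e)^p\<close> if \<open>p\<close> divides \<open>e\<close> and \<open>1 \<pm> q^(pe)\<close>
  otherwise. Sorting the factors of the triple product according to whether \<open>p\<close> divides the
  exponent gives \<open>\<Prod>\<^sub>k \<theta>(q \<zeta>^k) \<cdot> \<theta>(q^(p^2)) = \<theta>(q^p)^(p+1)\<close>, which is the case \<open>j = 1\<close>.
  Induction on \<open>j\<close>, writing \<open>k = m p + s\<close>, reduces the general case to this one and to the
  exponent identity \<open>b(j+2) + p b(j) = (p+1) b(j+1)\<close>. The triple product itself is the limit of
  a finite identity for Gaussian binomial coefficients, the limit being justified by Tannery's
  theorem.\<close>

section \<open>Products with geometrically small factors\<close>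

lemma exp_neg_le_norm_one_plus:
  fixes z :: "'a::real_normed_field"
  assumes "norm z \<le> t" "t < 1"
  shows "exp (- (t / (1 - t))) \<le> norm (1 + z)"
proof -
  have "1 / (1 - t) = 1 + t / (1 - t)" using assms(2) by (simp add: field_simps)
  also have "\<dots> \<le> exp (t / (1 - t))" by (rule exp_ge_add_one_self)
  finally have "exp (- (t / (1 - t))) \<le> 1 - t" using assms(2) by (simp add: exp_minus field_simps)
  also have "\<dots> \<le> 1 - norm z" using assms(1) by simp
  also have "\<dots> \<le> norm (1 + z)" by (metis norm_diff_ineq norm_minus_cancel norm_one diff_minus_eq_add)
  finally show ?thesis .
qed

lemma sum_geometric_Suc_le:
  fixes r :: real
  assumes "0 \<le> r" "r < 1"
  shows "(\<Sum>i<n. r ^ Suc i) \<le> 1 / (1 - r)"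
proof -
  have "(\<Sum>i<n. r ^ Suc i) \<le> (\<Sum>i<n. r ^ i)"
    using assms by (intro sum_mono power_decreasing) auto
  also have "\<dots> = (1 - r ^ n) / (1 - r)" using assms by (simp add: sum_gp_strict)
  also have "\<dots> \<le> 1 / (1 - r)" using assms by (intro divide_right_mono) auto
  finally show ?thesis .
qed

lemma norm_prod_one_plus_bounds:
  fixes c :: "nat \<Rightarrow> 'a::real_normed_field"
  assumes r: "0 \<le> r" "r < 1" and c: "\<And>i. norm (c i) \<le> r ^ Suc i"
  shows "norm (\<Prod>i<n. 1 + c i) \<le> exp (1 / (1 - r))"
    and "exp (- 1 / (1 - r)\<^sup>2) \<le> norm (\<Prod>i<n. 1 + c i)"
proof -
  have geom: "(\<Sum>i<n. r ^ Suc i) \<le> 1 / (1 - r)" by (rule sum_geometric_Suc_le[OF r])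
  have small: "r ^ Suc i \<le> r" for i using r power_decreasing[of 1 "Suc i" r] by simp
  have "norm (\<Prod>i<n. 1 + c i) \<le> (\<Prod>i<n. exp (r ^ Suc i))"
    unfolding prod_norm[symmetric]
  proof (intro prod_mono conjI norm_ge_zero)
    fix i
    have "norm (1 + c i) \<le> 1 + norm (c i)" by (metis norm_one norm_triangle_ineq)
    also have "\<dots> \<le> exp (r ^ Suc i)" using c[of i] exp_ge_add_one_self[of "r ^ Suc i"] by linarith
    finally show "norm (1 + c i) \<le> exp (r ^ Suc i)" .
  qed
  also have "\<dots> \<le> exp (1 / (1 - r))" using geom by (simp add: exp_sum[symmetric])
  finally show "norm (\<Prod>i<n. 1 + c i) \<le> exp (1 / (1 - r))" .
  have "- 1 / (1 - r)\<^sup>2 \<le> - (\<Sum>i<n. r ^ Suc i) / (1 - r)"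
    using divide_right_mono[OF geom, of "1 - r"] r by (simp add: power2_eq_square)
  hence "exp (- 1 / (1 - r)\<^sup>2) \<le> (\<Prod>i<n. exp (- (r ^ Suc i / (1 - r))))"
    by (simp add: exp_sum[symmetric] sum_negf sum_divide_distrib)
  also have "\<dots> \<le> norm (\<Prod>i<n. 1 + c i)"
    unfolding prod_norm[symmetric]
  proof (intro prod_mono conjI)
    fix i
    have "r ^ Suc i / (1 - r ^ Suc i) \<le> r ^ Suc i / (1 - r)"
      using r small[of i] by (intro divide_left_mono) auto
    hence "exp (- (r ^ Suc i / (1 - r))) \<le> exp (- (r ^ Suc i / (1 - r ^ Suc i)))" by simp
    also have "\<dots> \<le> norm (1 + c i)"
      using c r small[of i] by (intro exp_neg_le_norm_one_plus) auto
    finally show "exp (- (r ^ Suc i / (1 - r))) \<le> norm (1 + c i)" .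
  qed simp
  finally show "exp (- 1 / (1 - r)\<^sup>2) \<le> norm (\<Prod>i<n. 1 + c i)" .
qed

lemma prod_one_plus_geometric_tendsto:
  fixes c :: "nat \<Rightarrow> 'a::{real_normed_field, banach}"
  assumes r: "r < 1" and c: "\<And>i. norm (c i) \<le> r ^ Suc i"
  shows "(\<lambda>n. \<Prod>i<n. 1 + c i) \<longlonglongrightarrow> (\<Prod>i. 1 + c i)"
    and "(\<Prod>i. 1 + c i) \<noteq> 0"
proof -
  have r0: "0 \<le> r" using order_trans[OF norm_ge_zero c[of 0]] by simp
  have "summable (\<lambda>i. r ^ Suc i)" using r r0 by (simp add: summable_geometric)
  hence "summable (\<lambda>i. norm ((1 + c i) - 1))"
    by (rule summable_comparison_test') (use c in simp)
  hence conv: "convergent_prod (\<lambda>i. 1 + c i)"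
    by (intro abs_convergent_prod_imp_convergent_prod summable_imp_abs_convergent_prod)
  have "1 + c i \<noteq> 0" for i
  proof
    assume "1 + c i = 0"
    hence "norm (c i) = 1" by (simp add: add_eq_0_iff)
    moreover have "r ^ Suc i < 1" using r r0 power_decreasing[of 1 "Suc i" r] by simp
    ultimately show False using c[of i] by simp
  qed
  with conv show "(\<Prod>i. 1 + c i) \<noteq> 0" by (rule prodinf_nonzero)
  have "(\<lambda>n. \<Prod>i<Suc n. 1 + c i) \<longlonglongrightarrow> (\<Prod>i. 1 + c i)"
    using convergent_prod_LIMSEQ[OF conv] by (simp add: lessThan_Suc_atMost)
  thus "(\<lambda>n. \<Prod>i<n. 1 + c i) \<longlonglongrightarrow> (\<Prod>i. 1 + c i)" by (rule LIMSEQ_imp_Suc)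
qed

section \<open>Gaussian binomials and Jacobi's triple product\<close>

text \<open>\<open>qpoch s d q n\<close> is the \<open>q\<close>-Pochhammer symbol \<open>(-s q^d; q^2)\<^sub>n\<close>, so that
  \<open>qfact q n = (q^2; q^2)\<^sub>n\<close>.\<close>
definition qpoch :: "complex \<Rightarrow> nat \<Rightarrow> complex \<Rightarrow> nat \<Rightarrow> complex" where
  "qpoch s d q n = (\<Prod>i<n. 1 + s * q ^ (2 * i + d))"

definition qpoch_inf :: "complex \<Rightarrow> nat \<Rightarrow> complex \<Rightarrow> complex" where
  "qpoch_inf s d q = (\<Prod>i. 1 + s * q ^ (2 * i + d))"

abbreviation qfact :: "complex \<Rightarrow> nat \<Rightarrow> complex" where
  "qfact q n \<equiv> qpoch (- 1) 2 q n"

lemma qpoch_factor_bound: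
  fixes s q :: complex
  assumes "norm s = 1" "d \<ge> 1" "norm q < 1"
  shows "norm (s * q ^ (2 * i + d)) \<le> norm q ^ Suc i"
proof -
  have "norm q ^ (2 * i + d) \<le> norm q ^ Suc i"
    using assms by (intro power_decreasing) auto
  thus ?thesis unfolding norm_mult norm_power assms(1) by simp
qed

lemma qpoch_tendsto:
  assumes "norm s = 1" "d \<ge> 1" "norm q < 1"
  shows "qpoch s d q \<longlonglongrightarrow> qpoch_inf s d q"
  unfolding qpoch_def[abs_def] qpoch_inf_def
  by (rule prod_one_plus_geometric_tendsto(1)[OF assms(3) qpoch_factor_bound[OF assms]])

lemma qpoch_inf_nonzero:
  assumes "norm s = 1" "d \<ge> 1" "norm q < 1"
  shows "qpoch_inf s d q \<noteq> 0"
  unfolding qpoch_inf_def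
  by (rule prod_one_plus_geometric_tendsto(2)[OF assms(3) qpoch_factor_bound[OF assms]])

lemma qpoch_norm_bounds:
  assumes "norm s = 1" "d \<ge> 1" "norm q < 1"
  shows "norm (qpoch s d q n) \<le> exp (1 / (1 - norm q))"
    and "exp (- 1 / (1 - norm q)\<^sup>2) \<le> norm (qpoch s d q n)"
  unfolding qpoch_def
  using norm_prod_one_plus_bounds[OF norm_ge_zero assms(3) qpoch_factor_bound[OF assms]] by auto

lemma qpoch_nonzero:
  assumes "norm s = 1" "d \<ge> 1" "norm q < 1"
  shows "qpoch s d q n \<noteq> 0"
  using qpoch_norm_bounds(2)[OF assms, of n] exp_gt_zero[of "- 1 / (1 - norm q)\<^sup>2"] by auto

lemma qfact_0 [simp]: "qfact q 0 = 1"
  by (simp add: qpoch_def)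

lemma qfact_Suc: "qfact q (Suc n) = qfact q n * (1 - q ^ (2 * Suc n))"
  by (simp add: qpoch_def)

lemma qfact_nonzero: "norm q < 1 \<Longrightarrow> qfact q n \<noteq> 0"
  by (rule qpoch_nonzero) auto

definition gauss_binom :: "complex \<Rightarrow> nat \<Rightarrow> nat \<Rightarrow> complex" where
  "gauss_binom q N k = (if k \<le> N then qfact q N / (qfact q k * qfact q (N - k)) else 0)"

lemma gauss_binom_0 [simp]: "norm q < 1 \<Longrightarrow> gauss_binom q N 0 = 1"
  using qfact_nonzero[of q N] by (simp add: gauss_binom_def)

lemma gauss_binom_self [simp]: "norm q < 1 \<Longrightarrow> gauss_binom q N N = 1"
  using qfact_nonzero[of q N] by (simp add: gauss_binom_def)

lemma gauss_binom_eq_0 [simp]: "N < k \<Longrightarrow> gauss_binom q N k = 0"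
  by (simp add: gauss_binom_def)

lemma gauss_binom_symmetric: "k \<le> N \<Longrightarrow> gauss_binom q N (N - k) = gauss_binom q N k"
  by (simp add: gauss_binom_def mult.commute)

lemma gauss_binom_pascal:
  assumes q: "norm q < 1" and k: "k \<le> N"
  shows "gauss_binom q (Suc N) (Suc k) = gauss_binom q N (Suc k) + q ^ (2 * (N - k)) * gauss_binom q N k"
proof (cases "k = N")
  case True thus ?thesis using q by simp
next
  case False
  then obtain m where N: "N = Suc (k + m)" using k by (metis add_Suc_right le_neq_implies_less less_iff_Suc_add)
  define a where "a = q ^ (2 * Suc k)"
  define b where "b = q ^ (2 * Suc m)"
  define F where "F = qfact q N"
  have nz: "qfact q n \<noteq> 0" for n using qfact_nonzero[OF q] .
  have a: "qfact q (Suc k) = qfact q k * (1 - a)" by (simp add: qfact_Suc a_def)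
  have b: "qfact q (Suc m) = qfact q m * (1 - b)" by (simp add: qfact_Suc b_def)
  have "q ^ (2 * Suc N) = a * b" by (simp add: a_def b_def N power_add[symmetric])
  hence "qfact q (Suc N) = F * ((1 - b) + b * (1 - a))"
    by (simp add: qfact_Suc F_def algebra_simps)
  also have "\<dots> / (qfact q (Suc k) * qfact q (Suc m))
      = F * (1 - b) / (qfact q (Suc k) * (qfact q m * (1 - b)))
        + b * (F * (1 - a) / (qfact q k * (1 - a) * qfact q (Suc m)))"
    unfolding a b by (simp add: distrib_left add_divide_distrib ac_simps)
  also have "\<dots> = F / (qfact q (Suc k) * qfact q m) + b * (F / (qfact q k * qfact q (Suc m)))"
    using nz[of "Suc k"] nz[of "Suc m"] unfolding a b by simp
  finally show ?thesis
    using k by (simp add: gauss_binom_def N F_def b_def Suc_diff_le)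
qed

lemma gauss_binomial_theorem:
  assumes q: "norm q < 1"
  shows "(\<Prod>i<N. 1 + x * q ^ (2 * i)) = (\<Sum>k\<le>N. gauss_binom q N k * q ^ (k * (k - 1)) * x ^ k)"
proof (induction N)
  case 0 thus ?case using q by simp
next
  case (Suc N)
  define S where "S N = (\<Sum>k\<le>N. gauss_binom q N k * q ^ (k * (k - 1)) * x ^ k)" for N
  have shift: "S N = 1 + (\<Sum>k\<le>N. gauss_binom q N (Suc k) * q ^ (Suc k * k) * x ^ Suc k)"
  proof -
    have "S N = (\<Sum>k\<le>Suc N. gauss_binom q N k * q ^ (k * (k - 1)) * x ^ k)"
      by (simp add: S_def)
    also have "\<dots> = 1 + (\<Sum>k\<le>N. gauss_binom q N (Suc k) * q ^ (Suc k * k) * x ^ Suc k)"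
      by (subst sum.atMost_Suc_shift) (simp add: q)
    finally show ?thesis .
  qed
  have pascal_part: "(\<Sum>k\<le>N. q ^ (2 * (N - k)) * gauss_binom q N k * q ^ (Suc k * k) * x ^ Suc k)
      = x * q ^ (2 * N) * S N"
    unfolding S_def sum_distrib_left
  proof (rule sum.cong)
    fix k assume "k \<in> {..N}"
    then obtain d where "N = k + d" by (auto simp: le_iff_add)
    hence "2 * (N - k) + Suc k * k = k * (k - 1) + 2 * N" by (cases k) (auto simp: algebra_simps)
    hence "q ^ (2 * (N - k)) * q ^ (Suc k * k) = q ^ (k * (k - 1)) * q ^ (2 * N)"
      by (simp only: power_add[symmetric])
    thus "q ^ (2 * (N - k)) * gauss_binom q N k * q ^ (Suc k * k) * x ^ Suc k =
          x * q ^ (2 * N) * (gauss_binom q N k * q ^ (k * (k - 1)) * x ^ k)"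
      by (simp add: algebra_simps)
  qed simp
  have "S (Suc N) = 1 + (\<Sum>k\<le>N. gauss_binom q (Suc N) (Suc k) * q ^ (Suc k * k) * x ^ Suc k)"
    unfolding S_def by (subst sum.atMost_Suc_shift) (simp add: q)
  also have "\<dots> = 1 + (\<Sum>k\<le>N. gauss_binom q N (Suc k) * q ^ (Suc k * k) * x ^ Suc k)
      + (\<Sum>k\<le>N. q ^ (2 * (N - k)) * gauss_binom q N k * q ^ (Suc k * k) * x ^ Suc k)"
    by (simp add: gauss_binom_pascal[OF q] distrib_right sum.distrib)
  also have "\<dots> = S N * (1 + x * q ^ (2 * N))"
    unfolding pascal_part shift[symmetric] by (simp add: algebra_simps)
  finally show ?case using Suc by (simp add: S_def)
qed

lemma prod_lessThan_add: "(\<Prod>i<m + n. g i) = (\<Prod>i<m. g i) * (\<Prod>i<n. g (m + i))"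
  for g :: "nat \<Rightarrow> 'a::comm_monoid_mult"
  by (induction n) (simp_all add: ac_simps)

lemma sum_lessThan_add: "(\<Sum>i<m + n. g i) = (\<Sum>i<m. g i) + (\<Sum>i<n. g (m + i))"
  for g :: "nat \<Rightarrow> 'a::comm_monoid_add"
  by (induction n) (simp_all add: ac_simps)

lemma sum_odd_numbers: "(\<Sum>i<n. 2 * i + 1) = (n::nat)\<^sup>2"
  by (induction n) (simp_all add: power2_eq_square)

text \<open>The \<open>q\<close>-binomial theorem at \<open>N = 2n\<close>, \<open>x = q / q ^ (2n)\<close>.\<close>
lemma qpoch_odd_square_finite:
  assumes q: "norm q < 1" "q \<noteq> 0"
  shows "qpoch 1 1 q n ^ 2 = (\<Sum>k\<le>2*n. gauss_binom q (2*n) k * q ^ k\<^sup>2 * q ^ n\<^sup>2 / q ^ (2*n*k))"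
proof -
  define x where "x = q / q ^ (2*n)"
  have qn: "q ^ j \<noteq> 0" for j using q by simp
  have upper: "(\<Prod>m<n. 1 + x * q ^ (2 * (n + m))) = qpoch 1 1 q n"
    unfolding qpoch_def
  proof (rule prod.cong)
    fix m
    have "x * q ^ (2 * (n + m)) = q ^ (2 * m + 1) * q ^ (2*n) / q ^ (2*n)"
      unfolding x_def by (simp add: power_add algebra_simps)
    thus "1 + x * q ^ (2 * (n + m)) = 1 + 1 * q ^ (2 * m + 1)" using qn by simp
  qed simp
  have lower: "(\<Prod>i<n. 1 + x * q ^ (2 * i)) = qpoch 1 1 q n / q ^ n\<^sup>2"
  proof -
    have "(\<Prod>i<n. 1 + x * q ^ (2 * i)) = (\<Prod>m<n. 1 + x * q ^ (2 * (n - Suc m)))"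
      by (rule prod.nat_diff_reindex[symmetric])
    also have "\<dots> = (\<Prod>m<n. (1 + q ^ (2 * m + 1)) / q ^ (2 * m + 1))"
    proof (rule prod.cong)
      fix m assume "m \<in> {..<n}"
      hence e: "2 * n = 2 * (n - Suc m) + (2 * m + 1) + 1" by simp
      have "x * q ^ (2 * (n - Suc m)) = 1 / q ^ (2 * m + 1)"
        unfolding x_def e using qn by (simp add: power_add field_simps)
      thus "1 + x * q ^ (2 * (n - Suc m)) = (1 + q ^ (2 * m + 1)) / q ^ (2 * m + 1)"
        using qn[of "2 * m + 1"] by (simp add: add_divide_distrib add.commute)
    qed simp
    also have "\<dots> = (\<Prod>m<n. 1 + q ^ (2 * m + 1)) / (\<Prod>m<n. q ^ (2 * m + 1))"
      by (rule prod_dividef)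
    also have "(\<Prod>m<n. q ^ (2 * m + 1)) = q ^ n\<^sup>2"
      by (simp only: power_sum[symmetric] sum_odd_numbers)
    also have "(\<Prod>m<n. 1 + q ^ (2 * m + 1)) = qpoch 1 1 q n"
      by (simp add: qpoch_def)
    finally show ?thesis .
  qed
  have "(\<Prod>i<2*n. 1 + x * q ^ (2 * i))
      = (\<Prod>i<n. 1 + x * q ^ (2 * i)) * (\<Prod>m<n. 1 + x * q ^ (2 * (n + m)))"
    using prod_lessThan_add[of "\<lambda>i. 1 + x * q ^ (2 * i)" n n] by (simp only: mult_2[of n])
  also have "\<dots> = qpoch 1 1 q n ^ 2 / q ^ n\<^sup>2"
    unfolding upper lower by (simp only: power2_eq_square[of "qpoch 1 1 q n"] times_divide_eq_left)
  also have "(\<Prod>i<2*n. 1 + x * q ^ (2 * i)) = (\<Sum>k\<le>2*n. gauss_binom q (2*n) k * q ^ k\<^sup>2 / q ^ (2*n*k))"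
    unfolding gauss_binomial_theorem[OF q(1)]
  proof (rule sum.cong)
    fix k
    have "q ^ (k * (k - 1)) * q ^ k = q ^ k\<^sup>2"
      by (cases k) (simp_all add: power_add[symmetric] power2_eq_square algebra_simps)
    thus "gauss_binom q (2 * n) k * q ^ (k * (k - 1)) * x ^ k = gauss_binom q (2*n) k * q ^ k\<^sup>2 / q ^ (2*n*k)"
      unfolding x_def by (simp add: power_divide power_mult[symmetric] mult.commute mult.left_commute)
  qed simp
  finally have "qpoch 1 1 q n ^ 2 = q ^ n\<^sup>2 * (\<Sum>k\<le>2*n. gauss_binom q (2*n) k * q ^ k\<^sup>2 / q ^ (2*n*k))"
    using qn[of "n\<^sup>2"] by (simp add: divide_eq_eq mult.commute)
  also have "\<dots> = (\<Sum>k\<le>2*n. gauss_binom q (2*n) k * q ^ k\<^sup>2 * q ^ n\<^sup>2 / q ^ (2*n*k))"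
    by (simp add: sum_distrib_left mult_ac)
  finally show ?thesis .
qed

lemma power_square_shift:
  fixes q :: complex
  assumes "q \<noteq> 0" "k\<^sup>2 + n\<^sup>2 = d\<^sup>2 + 2*n*k"
  shows "q ^ k\<^sup>2 * q ^ n\<^sup>2 / q ^ (2*n*k) = q ^ d\<^sup>2"
proof -
  have "q ^ k\<^sup>2 * q ^ n\<^sup>2 = q ^ d\<^sup>2 * q ^ (2*n*k)"
    by (simp only: power_add[symmetric] assms(2))
  thus ?thesis using assms(1) by simp
qed

lemma qpoch_odd_square_finite_symmetric:
  assumes q: "norm q < 1" "q \<noteq> 0"
  shows "qpoch 1 1 q n ^ 2 = gauss_binom q (2*n) n + 2 * (\<Sum>m<n. gauss_binom q (2*n) (n+1+m) * q ^ (m+1)\<^sup>2)"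
proof -
  define f where "f k = gauss_binom q (2*n) k * (q ^ k\<^sup>2 * q ^ n\<^sup>2 / q ^ (2*n*k))" for k
  have f_upper: "f (n + 1 + m) = gauss_binom q (2*n) (n+1+m) * q ^ (m+1)\<^sup>2" for m
  proof -
    have "(n+1+m)\<^sup>2 + n\<^sup>2 = (m+1)\<^sup>2 + 2*n*(n+1+m)" by (simp add: power2_eq_square algebra_simps)
    thus ?thesis unfolding f_def by (simp only: power_square_shift[OF q(2)])
  qed
  have f_lower: "f (n - Suc m) = f (n + 1 + m)" if "m < n" for m
  proof -
    obtain d where n: "n = Suc m + d" using \<open>m < n\<close> by (auto simp: less_iff_Suc_add)
    have "(n - Suc m)\<^sup>2 + n\<^sup>2 = (m+1)\<^sup>2 + 2*n*(n - Suc m)" by (simp add: n power2_eq_square algebra_simps)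
    moreover have "gauss_binom q (2*n) (n - Suc m) = gauss_binom q (2*n) (n+1+m)"
      using gauss_binom_symmetric[of "n+1+m" "2*n" q] that by (simp add: numeral_2_eq_2)
    ultimately show ?thesis unfolding f_upper unfolding f_def by (simp only: power_square_shift[OF q(2)])
  qed
  have "qpoch 1 1 q n ^ 2 = (\<Sum>k<n + (1 + n). f k)"
    unfolding qpoch_odd_square_finite[OF q] f_def by (rule sum.cong) auto
  also have "\<dots> = (\<Sum>m<n. f (n - Suc m)) + f n + (\<Sum>m<n. f (n + 1 + m))"
    unfolding sum_lessThan_add sum.nat_diff_reindex by (simp add: add.assoc)
  also have "f n = gauss_binom q (2*n) n"
    unfolding f_def using power_square_shift[OF q(2), of n n 0] by (simp add: power2_eq_square)
  also have "(\<Sum>m<n. f (n - Suc m)) = (\<Sum>m<n. f (n + 1 + m))"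
    by (rule sum.cong) (simp_all add: f_lower)
  also have "(\<Sum>m<n. f (n + 1 + m)) = (\<Sum>m<n. gauss_binom q (2*n) (n+1+m) * q ^ (m+1)\<^sup>2)"
    by (simp only: f_upper)
  finally show ?thesis by simp
qed

definition theta_nome :: "complex \<Rightarrow> complex" where
  "theta_nome q = 1 + 2 * (\<Sum>n. q ^ (Suc n)\<^sup>2)"

lemma summable_theta_nome: "norm q < 1 \<Longrightarrow> summable (\<lambda>n. q ^ (Suc n)\<^sup>2)"
  for q :: complex
proof (rule summable_comparison_test'[of "\<lambda>n. norm q ^ n"])
  show "norm (q ^ (Suc n)\<^sup>2) \<le> norm q ^ n" if "norm q < 1" for n
    using that unfolding norm_power by (intro power_decreasing) (auto simp: power2_eq_square)
qed (simp_all add: summable_geometric)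

lemma qpoch_tendsto_compose:
  assumes "norm s = 1" "d \<ge> 1" "norm q < 1" "filterlim f at_top F"
  shows "((\<lambda>n. qpoch s d q (f n)) \<longlongrightarrow> qpoch_inf s d q) F"
  using filterlim_compose[OF qpoch_tendsto[OF assms(1-3)] assms(4)] .

lemma norm_gauss_binom_le:
  assumes "norm q < 1"
  shows "norm (gauss_binom q N k) \<le> exp (1 / (1 - norm q)) / exp (- 1 / (1 - norm q)\<^sup>2) ^ 2"
proof (cases "k \<le> N")
  case True
  have "norm (gauss_binom q N k) = norm (qfact q N) / (norm (qfact q k) * norm (qfact q (N - k)))"
    using True by (simp add: gauss_binom_def norm_mult norm_divide)
  also have "\<dots> \<le> exp (1 / (1 - norm q)) / (exp (- 1 / (1 - norm q)\<^sup>2) * exp (- 1 / (1 - norm q)\<^sup>2))"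
    using qpoch_norm_bounds[of "- 1" 2 q] assms by (intro frac_le mult_mono) auto
  finally show ?thesis by (simp add: power2_eq_square)
qed (simp add: gauss_binom_def)

lemma gauss_binom_central_tendsto:
  assumes q: "norm q < 1"
  shows "(\<lambda>n. gauss_binom q (2 * n) (n + c)) \<longlonglongrightarrow> 1 / qpoch_inf (- 1) 2 q"
proof -
  define E where "E = qpoch_inf (- 1) 2 q"
  have "E \<noteq> 0" unfolding E_def using q by (intro qpoch_inf_nonzero) auto
  have lim: "filterlim f at_top sequentially \<Longrightarrow> (\<lambda>n. qfact q (f n)) \<longlonglongrightarrow> E" for f
    unfolding E_def using q by (intro qpoch_tendsto_compose) auto
  have "filterlim (\<lambda>n::nat. 2 * n) at_top sequentially"
    by (intro filterlim_subseq) (auto simp: strict_mono_def)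
  hence "(\<lambda>n. qfact q (2 * n) / (qfact q (n + c) * qfact q (n - c))) \<longlonglongrightarrow> E / (E * E)"
    using \<open>E \<noteq> 0\<close> by (intro tendsto_intros lim filterlim_add_const_nat_at_top
        filterlim_minus_const_nat_at_top) auto
  moreover have "\<forall>\<^sub>F n in sequentially.
      qfact q (2 * n) / (qfact q (n + c) * qfact q (n - c)) = gauss_binom q (2 * n) (n + c)"
    using eventually_ge_at_top[of c] by eventually_elim (simp add: gauss_binom_def)
  ultimately show ?thesis using \<open>E \<noteq> 0\<close> by (simp add: E_def tendsto_cong)
qed

lemma gauss_binom_tail_sum_tendsto:
  assumes q: "norm q < 1"
  shows "(\<lambda>n. \<Sum>m<n. gauss_binom q (2*n) (n+1+m) * q ^ (m+1)\<^sup>2)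
           \<longlonglongrightarrow> (\<Sum>m. q ^ (m+1)\<^sup>2 / qpoch_inf (- 1) 2 q)"
proof -
  define B where "B = exp (1 / (1 - norm q)) / exp (- 1 / (1 - norm q)\<^sup>2) ^ 2"
  define a where "a m n = (if m < n then gauss_binom q (2*n) (n+1+m) else 0) * q ^ (m+1)\<^sup>2" for m n
  have "norm (a m n) \<le> B * norm q ^ m" for m n
  proof -
    have "norm (a m n) \<le> B * norm q ^ (m+1)\<^sup>2"
      unfolding a_def B_def norm_mult norm_power
      using norm_gauss_binom_le[OF q, of "2*n" "n+1+m"] by (intro mult_right_mono) auto
    also have "\<dots> \<le> B * norm q ^ m"
      using q by (intro mult_left_mono power_decreasing) (auto simp: B_def power2_eq_square)
    finally show ?thesis .
  qed
  moreover have "summable (\<lambda>m. B * norm q ^ m)"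
    using q by (intro summable_mult summable_geometric) auto
  moreover have "(\<lambda>n. a m n) \<longlonglongrightarrow> q ^ (m+1)\<^sup>2 / qpoch_inf (- 1) 2 q" for m
  proof -
    have "(\<lambda>n. gauss_binom q (2*n) (n + (m + 1)) * q ^ (m+1)\<^sup>2)
        \<longlonglongrightarrow> 1 / qpoch_inf (- 1) 2 q * q ^ (m+1)\<^sup>2"
      by (intro tendsto_intros gauss_binom_central_tendsto q)
    moreover have "\<forall>\<^sub>F n in sequentially. gauss_binom q (2*n) (n + (m + 1)) * q ^ (m+1)\<^sup>2 = a m n"
      using eventually_gt_at_top[of m] by eventually_elim (simp add: a_def add.assoc)
    ultimately show ?thesis by (simp add: tendsto_cong)
  qed
  ultimately have "(\<lambda>n. \<Sum>m. a m n) \<longlonglongrightarrow> (\<Sum>m. q ^ (m+1)\<^sup>2 / qpoch_inf (- 1) 2 q)"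
    using tannerys_theorem[of a "\<lambda>m. q ^ (m+1)\<^sup>2 / qpoch_inf (- 1) 2 q" sequentially "\<lambda>m. B * norm q ^ m"]
    by (auto intro: always_eventually)
  moreover have "(\<Sum>m. a m n) = (\<Sum>m<n. gauss_binom q (2*n) (n+1+m) * q ^ (m+1)\<^sup>2)" for n
    by (subst suminf_finite[of "{..<n}"]) (auto simp: a_def)
  ultimately show ?thesis by simp
qed

text \<open>Jacobi's triple product at \<open>z = 1\<close>, the limit of \<open>qpoch_odd_square_finite_symmetric\<close>.\<close>
theorem theta_nome_triple_product:
  assumes q: "norm q < 1"
  shows "theta_nome q = qpoch_inf (- 1) 2 q * qpoch_inf 1 1 q ^ 2"
proof (cases "q = 0")
  case True
  thus ?thesis by (simp add: theta_nome_def qpoch_inf_def power2_eq_square)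
next
  case False
  define E where "E = qpoch_inf (- 1) 2 q"
  have "E \<noteq> 0" unfolding E_def using q by (intro qpoch_inf_nonzero) auto
  have "(\<lambda>n. qpoch 1 1 q n ^ 2) \<longlonglongrightarrow> 1 / E + 2 * (\<Sum>m. q ^ (m+1)\<^sup>2 / E)"
    unfolding qpoch_odd_square_finite_symmetric[OF q False] E_def
    using gauss_binom_central_tendsto[OF q, of 0] gauss_binom_tail_sum_tendsto[OF q]
    by (intro tendsto_intros) simp_all
  moreover have "(\<lambda>n. qpoch 1 1 q n ^ 2) \<longlonglongrightarrow> qpoch_inf 1 1 q ^ 2"
    using q by (intro tendsto_intros qpoch_tendsto) auto
  ultimately have "1 / E + 2 * (\<Sum>m. q ^ (m+1)\<^sup>2 / E) = qpoch_inf 1 1 q ^ 2"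
    by (rule LIMSEQ_unique)
  moreover have "(\<Sum>m. q ^ (m+1)\<^sup>2 / E) = (\<Sum>m. q ^ (m+1)\<^sup>2) / E"
    using summable_theta_nome[OF q] by (intro suminf_divide) simp
  ultimately have "theta_nome q / E = qpoch_inf 1 1 q ^ 2"
    by (simp add: theta_nome_def add_divide_distrib)
  thus ?thesis using \<open>E \<noteq> 0\<close> by (simp add: E_def divide_eq_eq mult.commute)
qed

section \<open>Products over the \<open>p\<close>-th roots of unity\<close>

definition unit_root :: "nat \<Rightarrow> complex" where
  "unit_root n = exp (2 * of_real pi * \<i> / of_nat n)"

lemma unit_root_power: "unit_root n ^ j = exp (2 * of_real pi * \<i> * of_nat j / of_nat n)"
  unfolding unit_root_def exp_of_nat_mult[symmetric] by (simp add: algebra_simps)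

lemma unit_root_power_eq_1_iff: "n > 0 \<Longrightarrow> unit_root n ^ j = 1 \<longleftrightarrow> n dvd j"
  unfolding unit_root_power by (rule complex_root_unity_eq_1) simp

lemma norm_unit_root [simp]: "norm (unit_root n) = 1"
  unfolding unit_root_def by (simp add: norm_exp_eq_Re)

lemma prod_roots_unity_diff:
  assumes n: "n > 0"
  shows "(\<Prod>z | z ^ n = 1. X - z) = X ^ n - (1::complex)"
proof -
  define P :: "complex poly" where "P = monom 1 n - 1"
  have poly_P: "poly P x = x ^ n - 1" for x by (simp add: P_def poly_monom)
  have "lead_coeff P = 1"
    using n lead_coeff_add_le[of "- 1" "monom (1::complex) n"] by (simp add: P_def degree_monom_eq)
  moreover have "rsquarefree P"
    unfolding rsquarefree_roots
  proof (intro allI notI)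
    fix a assume "poly P a = 0 \<and> poly (pderiv P) a = 0"
    hence "a ^ n = 1" and "of_nat n * a ^ (n - 1) = 0"
      by (auto simp: poly_P P_def pderiv_diff pderiv_monom poly_monom)
    thus False using n by (cases "a = 0") (auto simp: zero_power)
  qed
  ultimately have "P = (\<Prod>z | poly P z = 0. [:- z, 1:])"
    using complex_poly_decompose_rsquarefree[of P] by simp
  hence "poly P X = (\<Prod>z | z ^ n = 1. X - z)" by (simp add: poly_prod poly_P)
  thus ?thesis by (simp add: poly_P)
qed

lemma bij_betw_unit_root_powers:
  assumes p: "prime p" and e: "\<not> p dvd e"
  shows "bij_betw (\<lambda>k. unit_root p ^ (e * k)) {..<p} {z. z ^ p = 1}"
proof -
  have p0: "p > 0" using p by (simp add: prime_gt_0_nat)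
  have inj: "inj_on (\<lambda>k. unit_root p ^ (e * k)) {..<p}"
  proof (rule linorder_inj_onI)
    fix k k' assume kk': "k < k'" "k' \<in> {..<p}"
    show "unit_root p ^ (e * k) \<noteq> unit_root p ^ (e * k')"
    proof
      assume eq: "unit_root p ^ (e * k) = unit_root p ^ (e * k')"
      have "unit_root p ^ (e * k') = unit_root p ^ (e * k) * unit_root p ^ (e * (k' - k))"
        using kk' by (simp add: power_add[symmetric] algebra_simps)
      hence "unit_root p ^ (e * (k' - k)) = 1"
        using eq by (simp add: unit_root_def)
      hence "p dvd e * (k' - k)" using unit_root_power_eq_1_iff[OF p0] by simp
      hence "p dvd k' - k" using e p by (simp add: prime_dvd_mult_iff)
      thus False using kk' by (auto dest: dvd_imp_le)
    qed
  qed auto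
  have "unit_root p ^ (e * k) \<in> {z. z ^ p = 1}" for k
    using unit_root_power_eq_1_iff[OF p0, of "p * (e * k)"]
    by (simp add: power_mult[symmetric] mult.commute)
  hence "(\<lambda>k. unit_root p ^ (e * k)) ` {..<p} \<subseteq> {z. z ^ p = 1}" by auto
  moreover have "card ((\<lambda>k. unit_root p ^ (e * k)) ` {..<p}) = card {z::complex. z ^ p = 1}"
    using card_image[OF inj] card_roots_unity_eq[OF p0] by simp
  ultimately show ?thesis
    unfolding bij_betw_def using inj by (intro conjI card_subset_eq finite_roots_unity) (use p0 in auto)
qed

lemma prod_one_plus_unit_root_powers:
  assumes p: "prime p" "odd p" and e: "\<not> p dvd e"
  shows "(\<Prod>k<p. 1 + u * unit_root p ^ (e * k)) = 1 + u ^ p"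
proof (cases "u = 0")
  case True thus ?thesis using p by (simp add: prime_gt_0_nat zero_power)
next
  case False
  have p0: "p > 0" using p by (simp add: prime_gt_0_nat)
  have "(\<Prod>k<p. 1 + u * unit_root p ^ (e * k)) = (\<Prod>z | z ^ p = 1. 1 + u * z)"
    using prod.reindex_bij_betw[OF bij_betw_unit_root_powers[OF p(1) e]] by simp
  also have "\<dots> = (\<Prod>z | z ^ p = 1. (- u) * (- 1 / u - z))"
    using False by (intro prod.cong) (auto simp: field_simps)
  also have "\<dots> = (- u) ^ card {z::complex. z ^ p = 1} * (\<Prod>z | z ^ p = 1. - 1 / u - z)"
    by (simp only: prod.distrib prod_constant)
  also have "\<dots> = (- u) ^ p * ((- 1 / u) ^ p - 1)"
    by (simp only: prod_roots_unity_diff[OF p0] card_roots_unity_eq[OF p0])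
  also have "\<dots> = 1 + u ^ p"
    using False p(2) by (simp add: power_minus_odd power_divide field_simps)
  finally show ?thesis .
qed

lemma prod_one_plus_rotated_power:
  assumes p: "prime p" "odd p"
  shows "(\<Prod>k<p. 1 + s * (q * unit_root p ^ k) ^ e) =
         (if p dvd e then (1 + s * q ^ e) ^ p else 1 + s ^ p * (q ^ p) ^ e)"
proof -
  have rotate: "1 + s * (q * unit_root p ^ k) ^ e = 1 + (s * q ^ e) * unit_root p ^ (e * k)" for k
    by (simp add: power_mult_distrib power_mult[symmetric] mult.commute mult.left_commute)
  show ?thesis
  proof (cases "p dvd e")
    case True
    hence "unit_root p ^ (e * k) = 1" for k
      using p unit_root_power_eq_1_iff[of p "e * k"] by (simp add: prime_gt_0_nat)
    thus ?thesis unfolding rotate using True by simp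
  next
    case False
    thus ?thesis unfolding rotate prod_one_plus_unit_root_powers[OF p False]
      by (simp add: power_mult_distrib power_mult[symmetric] mult.commute)
  qed
qed

lemma odd_dvd_two_mul_add_iff:
  fixes p r c d M :: nat
  assumes p: "odd p" and d: "d \<in> {1, 2}" and r: "r < p" and c: "2 * c + d = p * d"
  shows "p dvd 2 * (p * M + r) + d \<longleftrightarrow> r = c"
proof
  assume "p dvd 2 * (p * M + r) + d"
  moreover have "2 * (p * M + r) + d = (2 * r + d) + p * (2 * M)" by simp
  ultimately obtain t where t: "2 * r + d = p * t" by (metis dvd_add_left_iff dvd_triv_left dvdE)
  have "2 * r + d \<le> p * 2" using d r by auto
  hence "t \<le> 2" using t p by (cases "p = 0") auto
  moreover have "t \<noteq> 0" using t d by (cases "t = 0") auto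
  moreover have "even t \<longleftrightarrow> even d" using arg_cong[OF t, of even] p by simp
  ultimately have "t = d" using d by (auto simp: numeral_2_eq_2 le_Suc_eq)
  thus "r = c" using t c by simp
next
  assume "r = c"
  hence "2 * (p * M + r) + d = p * (2 * M + d)" using c by (simp add: algebra_simps)
  thus "p dvd 2 * (p * M + r) + d" by simp
qed

lemma prod_blocks_eq:
  fixes g h :: "nat \<Rightarrow> 'a::comm_monoid_mult"
  assumes c: "c < p"
    and off: "\<And>M r. r < p \<Longrightarrow> r \<noteq> c \<Longrightarrow> g (p * M + r) = h (p * M + r)"
    and on: "\<And>M. g (p * M + c) * a M = h (p * M + c) * b M"
  shows "(\<Prod>i<p * M. g i) * (\<Prod>m<M. a m) = (\<Prod>i<p * M. h i) * (\<Prod>m<M. b m)"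
proof (induction M)
  case (Suc M)
  have block: "(\<Prod>i<p * Suc M. f i) = (\<Prod>i<p * M. f i) * (f (p * M + c) * (\<Prod>r\<in>{..<p} - {c}. f (p * M + r)))"
    for f :: "nat \<Rightarrow> 'a"
    using prod_lessThan_add[of f "p * M" p] prod.remove[of "{..<p}" c "\<lambda>r. f (p * M + r)"] c
    by (simp add: add.commute)
  have rest: "(\<Prod>r\<in>{..<p} - {c}. g (p * M + r)) = (\<Prod>r\<in>{..<p} - {c}. h (p * M + r))"
    by (rule prod.cong) (auto intro: off)
  have "(\<Prod>i<p * Suc M. g i) * (\<Prod>m<Suc M. a m)
      = ((\<Prod>i<p * M. g i) * (\<Prod>m<M. a m)) * (g (p * M + c) * a M) * (\<Prod>r\<in>{..<p} - {c}. g (p * M + r))"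
    unfolding block by (simp add: ac_simps)
  also have "\<dots> = ((\<Prod>i<p * M. h i) * (\<Prod>m<M. b m)) * (h (p * M + c) * b M) * (\<Prod>r\<in>{..<p} - {c}. h (p * M + r))"
    unfolding Suc.IH on rest ..
  also have "\<dots> = (\<Prod>i<p * Suc M. h i) * (\<Prod>m<Suc M. b m)"
    unfolding block by (simp add: ac_simps)
  finally show ?case .
qed simp

text \<open>In each block \<open>pM \<le> i < pM + p\<close> exactly one exponent \<open>2i + d\<close> is divisible by \<open>p\<close>; the
  roots of unity turn that factor into a \<open>p\<close>-th power and each of the others into a factor in \<open>q^p\<close>.\<close>
lemma qpoch_prod_unit_roots:
  assumes p: "prime p" "odd p" and s: "s ^ p = s" and d: "d \<in> {1, 2}"
  shows "(\<Prod>k<p. qpoch s d (q * unit_root p ^ k) (p * M)) * qpoch s d ((q ^ p) ^ p) M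
       = qpoch s d (q ^ p) (p * M) * qpoch s d (q ^ p) M ^ p"
proof -
  define Q where "Q = q ^ p"
  define g where "g i = (\<Prod>k<p. 1 + s * (q * unit_root p ^ k) ^ (2 * i + d))" for i
  define h where "h i = 1 + s * Q ^ (2 * i + d)" for i
  define a where "a m = 1 + s * (Q ^ p) ^ (2 * m + d)" for m
  define b where "b m = (1 + s * Q ^ (2 * m + d)) ^ p" for m
  have g_eq: "g i = (if p dvd 2 * i + d then (1 + s * q ^ (2 * i + d)) ^ p else h i)" for i
    unfolding g_def h_def Q_def prod_one_plus_rotated_power[OF p] s ..
  obtain c where c: "c < p" "2 * c + d = p * d"
  proof
    show "d * (p - 1) div 2 < p" "2 * (d * (p - 1) div 2) + d = p * d"
      using d p(2) prime_gt_0_nat[OF p(1)] by (auto elim!: oddE simp: algebra_simps)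
  qed
  have off: "g (p * M + r) = h (p * M + r)" if "r < p" "r \<noteq> c" for M r
    using odd_dvd_two_mul_add_iff[OF p(2) d that(1) c(2), of M] that(2) by (simp add: g_eq)
  have on: "g (p * M + c) * a M = h (p * M + c) * b M" for M
  proof -
    have e: "2 * (p * M + c) + d = p * (2 * M + d)" using c by (simp add: algebra_simps)
    have "g (p * M + c) = b M"
      unfolding g_eq e b_def Q_def by (simp add: power_mult)
    moreover have "h (p * M + c) = a M"
      unfolding h_def a_def e by (simp add: power_mult)
    ultimately show ?thesis by (simp add: mult.commute)
  qed
  have "(\<Prod>k<p. qpoch s d (q * unit_root p ^ k) (p * M)) = (\<Prod>i<p * M. g i)"
    unfolding qpoch_def g_def by (rule prod.swap)
  moreover have "qpoch s d ((q ^ p) ^ p) M = (\<Prod>m<M. a m)"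
    unfolding qpoch_def a_def Q_def ..
  moreover have "qpoch s d (q ^ p) (p * M) = (\<Prod>i<p * M. h i)"
    unfolding qpoch_def h_def Q_def ..
  moreover have "qpoch s d (q ^ p) M ^ p = (\<Prod>m<M. b m)"
    unfolding qpoch_def b_def Q_def by (rule prod_power_distrib)
  moreover have "(\<Prod>i<p * M. g i) * (\<Prod>m<M. a m) = (\<Prod>i<p * M. h i) * (\<Prod>m<M. b m)"
    by (rule prod_blocks_eq[of c p g h a b, OF c(1) off on])
  ultimately show ?thesis by (simp only:)
qed

lemma qpoch_inf_prod_unit_roots:
  assumes p: "prime p" "odd p" and s: "s ^ p = s" "norm s = 1" and d: "d \<in> {1, 2}"
    and q: "norm q < 1"
  shows "(\<Prod>k<p. qpoch_inf s d (q * unit_root p ^ k)) * qpoch_inf s d ((q ^ p) ^ p)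
       = qpoch_inf s d (q ^ p) ^ Suc p"
proof -
  have p0: "p > 0" using p by (simp add: prime_gt_0_nat)
  have d1: "d \<ge> 1" using d by auto
  have small: "norm (q ^ p) < 1" "norm ((q ^ p) ^ p) < 1" "norm (q * unit_root p ^ k) < 1" for k
    using q p0 by (simp_all add: norm_mult norm_power power_less_one_iff)
  have mult_p: "filterlim (\<lambda>M. p * M) at_top sequentially"
    using p0 by (intro filterlim_subseq) (auto simp: strict_mono_def)
  have id: "filterlim (\<lambda>M::nat. M) at_top sequentially" by (rule filterlim_ident)
  let ?lhs = "\<lambda>M. (\<Prod>k<p. qpoch s d (q * unit_root p ^ k) (p * M)) * qpoch s d ((q ^ p) ^ p) M"
  have "?lhs \<longlonglongrightarrow> (\<Prod>k<p. qpoch_inf s d (q * unit_root p ^ k)) * qpoch_inf s d ((q ^ p) ^ p)"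
    by (intro tendsto_intros qpoch_tendsto_compose s d1 small mult_p id)
  moreover have "?lhs \<longlonglongrightarrow> qpoch_inf s d (q ^ p) * qpoch_inf s d (q ^ p) ^ p"
    unfolding qpoch_prod_unit_roots[OF p s(1) d]
    by (intro tendsto_intros qpoch_tendsto_compose s d1 small mult_p id)
  ultimately show ?thesis using LIMSEQ_unique by fastforce
qed

lemma theta_nome_prod_unit_roots:
  assumes p: "prime p" "odd p" and q: "norm q < 1"
  shows "(\<Prod>k<p. theta_nome (q * unit_root p ^ k)) * theta_nome ((q ^ p) ^ p)
       = theta_nome (q ^ p) ^ Suc p"
proof -
  have p0: "p > 0" using p by (simp add: prime_gt_0_nat)
  have small: "norm (q ^ p) < 1" "norm ((q ^ p) ^ p) < 1" "norm (q * unit_root p ^ k) < 1" for k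
    using q p0 by (simp_all add: norm_mult norm_power power_less_one_iff)
  have minus_one: "(- 1 :: complex) ^ p = - 1" using p(2) by simp
  let ?E = "qpoch_inf (- 1) 2" and ?O = "qpoch_inf 1 1"
  have "(\<Prod>k<p. theta_nome (q * unit_root p ^ k)) * theta_nome ((q ^ p) ^ p)
      = ((\<Prod>k<p. ?E (q * unit_root p ^ k)) * ?E ((q ^ p) ^ p))
        * ((\<Prod>k<p. ?O (q * unit_root p ^ k)) * ?O ((q ^ p) ^ p)) ^ 2"
    unfolding theta_nome_triple_product[OF small(1)] theta_nome_triple_product[OF small(2)]
      theta_nome_triple_product[OF small(3)]
    by (simp add: prod.distrib prod_power_distrib power_mult_distrib)
  also have "\<dots> = ?E (q ^ p) ^ Suc p * (?O (q ^ p) ^ Suc p) ^ 2"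
    using qpoch_inf_prod_unit_roots[OF p _ _ _ q] minus_one by simp
  also have "\<dots> = theta_nome (q ^ p) ^ Suc p"
    unfolding theta_nome_triple_product[OF small(1)]
    by (simp add: power_mult_distrib power_mult[symmetric] mult.commute)
  finally show ?thesis .
qed

section \<open>The theta function \<open>\<theta>\<^sub>3\<close>\<close>

definition nome :: "complex \<Rightarrow> complex" where
  "nome \<tau> = exp (pi * \<i> * \<tau>)"

lemma theta3_eq_theta_nome: "theta3 \<tau> = theta_nome (nome \<tau>)"
proof -
  have "exp (pi * \<i> * of_nat m * \<tau>) = nome \<tau> ^ m" for m
    unfolding nome_def exp_of_nat_mult[symmetric] by (simp add: ac_simps)
  thus ?thesis unfolding theta3_def theta_nome_def by (simp only:)
qed

lemma norm_nome_less_1: "\<tau> \<in> upper_half_plane \<Longrightarrow> norm (nome \<tau>) < 1"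
  unfolding nome_def upper_half_plane_def by (simp add: norm_exp_eq_Re)

lemma nome_of_nat_mult: "nome (of_nat n * \<tau>) = nome \<tau> ^ n"
  unfolding nome_def exp_of_nat_mult[symmetric] by (simp add: ac_simps)

lemma nome_add_shift: "p > 0 \<Longrightarrow> nome (\<tau> + 2 * of_nat k / of_nat p) = nome \<tau> * unit_root p ^ k"
  unfolding nome_def unit_root_power exp_add[symmetric] by (simp add: algebra_simps)

lemma theta3_add_even: "theta3 (\<tau> + 2 * of_nat n) = theta3 \<tau>"
proof -
  have "nome (\<tau> + 2 * of_nat n) = nome \<tau> * exp (2 * of_real pi * \<i>) ^ n"
    unfolding nome_def exp_of_nat_mult[symmetric] exp_add[symmetric] by (simp add: algebra_simps)
  thus ?thesis unfolding theta3_eq_theta_nome by simp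
qed

lemma of_nat_mult_in_upper_half_plane:
  "\<tau> \<in> upper_half_plane \<Longrightarrow> n > 0 \<Longrightarrow> of_nat n * \<tau> \<in> upper_half_plane"
  unfolding upper_half_plane_def by simp

lemma theta3_nonzero: "\<tau> \<in> upper_half_plane \<Longrightarrow> theta3 \<tau> \<noteq> 0"
  using norm_nome_less_1 qpoch_inf_nonzero[of "- 1" 2 "nome \<tau>"] qpoch_inf_nonzero[of 1 1 "nome \<tau>"]
  by (simp add: theta3_eq_theta_nome theta_nome_triple_product)

lemma theta3_prod_shifts_prime:
  assumes p: "prime p" "odd p" and \<tau>: "\<tau> \<in> upper_half_plane"
  shows "(\<Prod>k<p. theta3 (\<tau> + 2 * of_nat k / of_nat p))
       = theta3 (of_nat p * \<tau>) ^ Suc p / theta3 (of_nat (p\<^sup>2) * \<tau>)"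
proof -
  have p0: "p > 0" using p by (simp add: prime_gt_0_nat)
  have "(nome \<tau> ^ p) ^ p = nome \<tau> ^ p\<^sup>2"
    by (simp add: power_mult[symmetric] power2_eq_square)
  hence "(\<Prod>k<p. theta3 (\<tau> + 2 * of_nat k / of_nat p)) * theta3 (of_nat (p\<^sup>2) * \<tau>)
      = theta3 (of_nat p * \<tau>) ^ Suc p"
    using theta_nome_prod_unit_roots[OF p norm_nome_less_1[OF \<tau>]]
    unfolding theta3_eq_theta_nome nome_add_shift[OF p0] nome_of_nat_mult by simp
  moreover have "theta3 (of_nat (p\<^sup>2) * \<tau>) \<noteq> 0"
    using \<tau> p0 by (intro theta3_nonzero of_nat_mult_in_upper_half_plane) auto
  ultimately show ?thesis by (simp add: field_simps)
qed

lemma b_seq_eq_sum: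
  assumes "p \<ge> 2" shows "b_seq p n = (\<Sum>i<n. p ^ i)"
proof -
  have "int ((p - 1) * (\<Sum>i<n. p ^ i)) = int (p ^ n - 1)"
    using power_diff_1_eq[of "int p" n] assms by (simp add: of_nat_diff)
  hence eq: "p ^ n - 1 = (p - 1) * (\<Sum>i<n. p ^ i)" by (simp only: of_nat_eq_iff)
  show ?thesis using assms unfolding b_seq_def eq by simp
qed

lemma b_seq_Suc: "p \<ge> 2 \<Longrightarrow> b_seq p (Suc n) = p * b_seq p n + 1"
  by (simp only: b_seq_eq_sum sum.lessThan_Suc_shift) (simp add: sum_distrib_left)

lemma prod_lessThan_mult_swap:
  "(\<Prod>k<n * p. f k) = (\<Prod>s<p. \<Prod>m<n. f (m * p + s))" for f :: "nat \<Rightarrow> 'a::comm_monoid_mult"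
proof -
  have "(\<Prod>k<n * p. f k) = (\<Prod>m<n. \<Prod>k\<in>{m * p..<m * p + p}. f k)"
    by (rule prod.nat_group[symmetric])
  also have "\<dots> = (\<Prod>m<n. \<Prod>s<p. f (m * p + s))"
  proof (rule prod.cong)
    fix m
    have "{m * p..<m * p + p} = {0 + m * p..<p + m * p}" by (simp add: add.commute)
    thus "(\<Prod>k\<in>{m * p..<m * p + p}. f k) = (\<Prod>s<p. f (m * p + s))"
      by (simp only: prod.atLeastLessThan_shift_bounds) (simp add: atLeast0LessThan o_def)
  qed simp
  finally show ?thesis by (rule trans[OF _ prod.swap])
qed

lemma prod_shifts_split:
  fixes f :: "complex \<Rightarrow> 'a::comm_monoid_mult"
  assumes "n > 0" "p > 0"
  shows "(\<Prod>k<n * p. f (\<tau> + 2 * of_nat k / of_nat (n * p)))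
       = (\<Prod>s<p. \<Prod>m<n. f ((\<tau> + 2 * of_nat s / of_nat (n * p)) + 2 * of_nat m / of_nat n))"
  unfolding prod_lessThan_mult_swap
  using assms by (intro prod.cong refl arg_cong[where f = f]) (simp add: field_simps)

lemma theta3_rescaled_shift:
  assumes "n > 0" "p > 0"
  shows "theta3 (of_nat n * (\<tau> + 2 * of_nat s / of_nat (n * p))) = theta3 (of_nat n * \<tau> + 2 * of_nat s / of_nat p)"
    and "theta3 (of_nat (n * p) * (\<tau> + 2 * of_nat s / of_nat (n * p))) = theta3 (of_nat (n * p) * \<tau>)"
proof -
  have "of_nat n * (\<tau> + 2 * of_nat s / of_nat (n * p)) = of_nat n * \<tau> + 2 * of_nat s / of_nat p"
    using assms by (simp add: field_simps)
  thus "theta3 (of_nat n * (\<tau> + 2 * of_nat s / of_nat (n * p))) = theta3 (of_nat n * \<tau> + 2 * of_nat s / of_nat p)"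
    by (rule arg_cong)
  have "of_nat (n * p) * (\<tau> + 2 * of_nat s / of_nat (n * p)) = of_nat (n * p) * \<tau> + 2 * of_nat s"
    using assms by (simp add: field_simps)
  thus "theta3 (of_nat (n * p) * (\<tau> + 2 * of_nat s / of_nat (n * p))) = theta3 (of_nat (n * p) * \<tau>)"
    by (simp only: theta3_add_even)
qed

lemma power_quotient_exponents:
  fixes X Y :: "'a::field"
  assumes "X \<noteq> 0" "b' = p * b + 1" "b'' = p * b' + 1"
  shows "(X ^ Suc p / Y) ^ b' / X ^ (p * b) = X ^ b'' / Y ^ b'"
proof -
  have "Suc p * b' = b'' + p * b" using assms(2,3) by (simp add: algebra_simps)
  hence "(X ^ Suc p) ^ b' = X ^ b'' * X ^ (p * b)" by (simp only: power_mult[symmetric] power_add)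
  thus ?thesis using assms(1) by (simp add: power_divide)
qed

lemma theta3_prod_shifts:
  assumes p: "prime p" "odd p" and \<tau>: "\<tau> \<in> upper_half_plane"
  shows "(\<Prod>k<p^j. theta3 (\<tau> + 2 * of_nat k / of_nat (p^j)))
       = theta3 (of_nat (p^j) * \<tau>) ^ b_seq p (Suc j) / theta3 (of_nat (p^Suc j) * \<tau>) ^ b_seq p j"
  using \<tau>
proof (induction j arbitrary: \<tau>)
  case 0
  have "p \<ge> 2" using p by (simp add: prime_ge_2_nat)
  thus ?case by (simp add: b_seq_def)
next
  case (Suc j)
  define n where "n = p ^ j"
  have p2: "p \<ge> 2" using p by (simp add: prime_ge_2_nat)
  hence p0: "p > 0" and n: "n > 0" "p ^ Suc j = n * p" "p ^ Suc (Suc j) = n * p * p" by (simp_all add: n_def)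
  define \<sigma> where "\<sigma> s = \<tau> + 2 * of_nat s / of_nat (n * p)" for s
  have \<sigma>: "\<sigma> s \<in> upper_half_plane" for s
    using Suc.prems by (simp add: \<sigma>_def upper_half_plane_def)
  have "(\<Prod>k<p ^ Suc j. theta3 (\<tau> + 2 * of_nat k / of_nat (p ^ Suc j)))
      = (\<Prod>s<p. \<Prod>m<n. theta3 (\<sigma> s + 2 * of_nat m / of_nat n))"
    unfolding n(2) \<sigma>_def using n(1) p2 by (intro prod_shifts_split) auto
  also have "\<dots> = (\<Prod>s<p. theta3 (of_nat n * \<sigma> s) ^ b_seq p (Suc j)
                       / theta3 (of_nat (n * p) * \<sigma> s) ^ b_seq p j)"
    using Suc.IH[OF \<sigma>, unfolded n(2) n_def[symmetric]] by simp
  also have "\<dots> = (\<Prod>s<p. theta3 (of_nat n * \<tau> + 2 * of_nat s / of_nat p) ^ b_seq p (Suc j)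
                       / theta3 (of_nat (n * p) * \<tau>) ^ b_seq p j)"
    unfolding \<sigma>_def theta3_rescaled_shift[OF n(1) p0] ..
  also have "\<dots> = (\<Prod>s<p. theta3 (of_nat n * \<tau> + 2 * of_nat s / of_nat p)) ^ b_seq p (Suc j)
                   / theta3 (of_nat (n * p) * \<tau>) ^ (p * b_seq p j)"
    by (simp add: prod_dividef prod_power_distrib power_mult[symmetric] mult.commute)
  also have "(\<Prod>s<p. theta3 (of_nat n * \<tau> + 2 * of_nat s / of_nat p))
      = theta3 (of_nat (n * p) * \<tau>) ^ Suc p / theta3 (of_nat (n * p * p) * \<tau>)"
    using theta3_prod_shifts_prime[OF p of_nat_mult_in_upper_half_plane[OF Suc.prems n(1)]]
    by (simp add: power2_eq_square mult_ac)
  also have "(theta3 (of_nat (n * p) * \<tau>) ^ Suc p / theta3 (of_nat (n * p * p) * \<tau>)) ^ b_seq p (Suc j)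
        / theta3 (of_nat (n * p) * \<tau>) ^ (p * b_seq p j)
      = theta3 (of_nat (n * p) * \<tau>) ^ b_seq p (Suc (Suc j))
        / theta3 (of_nat (n * p * p) * \<tau>) ^ b_seq p (Suc j)"
    using p2 n(1) Suc.prems
    by (intro power_quotient_exponents theta3_nonzero of_nat_mult_in_upper_half_plane b_seq_Suc) auto
  finally show ?case unfolding n(2,3) .
qed

theorem lemma2p2:
  fixes p j :: nat and \<tau> :: complex
  assumes "prime p" and "odd p" and "\<tau> \<in> upper_half_plane"
  shows "(\<Prod>k=0..<p^j. theta3 (\<tau> + 2 * of_nat k / of_nat (p^j)))
         = theta3 (of_nat (p^j) * \<tau>) ^ b_seq p (j+1) / theta3 (of_nat (p^(j+1)) * \<tau>) ^ b_seq p j"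
  using theta3_prod_shifts[OF assms] by (simp add: atLeast0LessThan)

end
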